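(* Let $k\ge4$ be even and let $G=(V,E)$ be a $k$-uniform cored hypergraph with Laplacian tensor $\mathcal L$ and signless Laplacian tensor $\mathcal Q$. For every $e\in E$ let $i_e\in e$ be a cored vertex. Then: (i) If $\mathbf x\in\mathbb R^n_+$ is an H-eigenvector of $\mathcal Q$ corresponding to $\lambda(\mathcal Q)$, then the vector $\mathbf y\in\mathbb R^n$ with $y_{i_e}=-x_{i_e}$ for all $e\in E$ and $y_j=x_j$ for all other $j$ is an H-eigenvector of $\mathcal L$ corresponding to $\lambda(\mathcal L)$. (ii) If $\mathbf x\in\mathbb R^n$ is an H-eigenvector of $\mathcal L$ corresponding to $\lambda(\mathcal L)$, then the vector $\mathbf y\in\mathbb R^n_+$ with $y_i=|x_i|$ for all $i\in[n]$ is an H-eigenvector of $\mathcal Q$ corresponding to $\lambda(\mathcal Q)$.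
   Context: A $k$-uniform hypergraph $G=(V,E)$ has $V=[n]$ and a nonempty set $E$ of $k$-element subsets of $V$; $d_i$ is the number of edges containing $i$. A cored vertex is a vertex of degree one; $G$ is cored if every edge contains a cored vertex. With $\mathcal D$ the diagonal tensor with entries $d_i$ and $\mathcal A$ the order-$k$ tensor with entries $\frac1{(k-1)!}$ at index tuples forming an edge and $0$ otherwise, $\mathcal L=\mathcal D-\mathcal A$ and $\mathcal Q=\mathcal D+\mathcal A$; thus $(\mathcal L\mathbf x^{k-1})_i=d_ix_i^{k-1}-\sum_{e\ni i}\prod_{s\in e\setminus\{i\}}x_s$ and $(\mathcal Q\mathbf x^{k-1})_i=d_ix_i^{k-1}+\sum_{e\ni i}\prod_{s\in e\setminus\{i\}}x_s$. A real $\lambda$ is an H-eigenvalue of $\mathcal T$ with H-eigenvector $\mathbf x\neq0$ if $(\mathcal T\mathbf x^{k-1})_i=\lambda x_i^{k-1}$ for all $i$; $\lambda(\mathcal T)$ is the largest H-eigenvalue. $\mathbb R^n_+$ is the nonnegative orthant. *)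

theory Defs
  imports Complex_Main
begin

text \<open>Vertices are 1..n; a vector in R^n is a function nat => real (only the
values on {1..n} matter); an order-k tensor of dimension n is a function on
index lists (nat list => real), only lists of length k with entries in {1..n} matter.\<close>

definition k_uniform_hypergraph :: "nat \<Rightarrow> nat \<Rightarrow> nat set set \<Rightarrow> bool" where
  "k_uniform_hypergraph n k E \<longleftrightarrow> E \<noteq> {} \<and> (\<forall>e\<in>E. e \<subseteq> {1..n} \<and> card e = k)"

definition hdeg :: "nat set set \<Rightarrow> nat \<Rightarrow> nat" where
  "hdeg E i = card {e\<in>E. i \<in> e}"

definition cored_vertex :: "nat set set \<Rightarrow> nat \<Rightarrow> bool" where
  "cored_vertex E i \<longleftrightarrow> hdeg E i = 1"

definition cored :: "nat set set \<Rightarrow> bool" where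
  "cored E \<longleftrightarrow> (\<forall>e\<in>E. \<exists>i\<in>e. cored_vertex E i)"

definition degree_tensor :: "nat set set \<Rightarrow> nat list \<Rightarrow> real" where
  "degree_tensor E is =
     (if is \<noteq> [] \<and> (\<forall>j\<in>set is. j = hd is) then real (hdeg E (hd is)) else 0)"

definition adjacency_tensor :: "nat \<Rightarrow> nat set set \<Rightarrow> nat list \<Rightarrow> real" where
  "adjacency_tensor k E is =
     (if length is = k \<and> set is \<in> E then 1 / fact (k - 1) else 0)"

definition laplacian_tensor :: "nat \<Rightarrow> nat set set \<Rightarrow> nat list \<Rightarrow> real" where
  "laplacian_tensor k E is = degree_tensor E is - adjacency_tensor k E is"

definition signless_laplacian_tensor :: "nat \<Rightarrow> nat set set \<Rightarrow> nat list \<Rightarrow> real" where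
  "signless_laplacian_tensor k E is = degree_tensor E is + adjacency_tensor k E is"

definition tensor_apply :: "nat \<Rightarrow> nat \<Rightarrow> (nat list \<Rightarrow> real) \<Rightarrow> (nat \<Rightarrow> real) \<Rightarrow> nat \<Rightarrow> real" where
  "tensor_apply n k T x i =
     (\<Sum>js \<in> {js. length js = k - 1 \<and> set js \<subseteq> {1..n}}. T (i # js) * prod_list (map x js))"

definition H_eigenpair :: "nat \<Rightarrow> nat \<Rightarrow> (nat list \<Rightarrow> real) \<Rightarrow> real \<Rightarrow> (nat \<Rightarrow> real) \<Rightarrow> bool" where
  "H_eigenpair n k T lam x \<longleftrightarrow>
     (\<exists>i\<in>{1..n}. x i \<noteq> 0) \<and>
     (\<forall>i\<in>{1..n}. tensor_apply n k T x i = lam * x i ^ (k - 1))"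

definition H_eigenvalue :: "nat \<Rightarrow> nat \<Rightarrow> (nat list \<Rightarrow> real) \<Rightarrow> real \<Rightarrow> bool" where
  "H_eigenvalue n k T lam \<longleftrightarrow> (\<exists>x. H_eigenpair n k T lam x)"

definition largest_H_eigenvalue :: "nat \<Rightarrow> nat \<Rightarrow> (nat list \<Rightarrow> real) \<Rightarrow> real \<Rightarrow> bool" where
  "largest_H_eigenvalue n k T lam \<longleftrightarrow>
     H_eigenvalue n k T lam \<and> (\<forall>mu. H_eigenvalue n k T mu \<longrightarrow> mu \<le> lam)"

end

theory Submission
  imports Defs "HOL-Analysis.Analysis" "HOL-Combinatorics.Multiset_Permutations"
begin

text \<open>For \<open>\<sigma> = \<plusminus>1\<close> the tensor \<open>D + \<sigma> A\<close> maps \<open>x\<close> to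
\<open>d_i x_i^(k-1) + \<sigma> \<Sum>_{e \<ni> i} \<Prod>_{s \<in> e-{i}} x_s\<close>; pairing with \<open>x\<close> gives the form
\<open>P_\<sigma>(x) = \<Sum>_j d_j x_j^k + \<sigma> k \<Sum>_e \<Prod>_{s \<in> e} x_s\<close>, so an H-eigenpair \<open>(\<mu>, x)\<close> satisfies
\<open>P_\<sigma>(x) = \<mu> \<Sum>_j x_j^k\<close>. As \<open>k\<close> is even, \<open>P_1\<close> attains a maximum \<open>M\<close> on the compact
sphere \<open>\<Sum>_j x_j^k = 1\<close>. Since \<open>P_\<sigma>(x) \<le> P_1(|x|)\<close>, every H-eigenvalue of \<open>Q\<close> and of \<open>L\<close>
is at most \<open>M\<close>, and any \<open>|x|\<close> attaining the bound is a critical point of \<open>P_1\<close> on the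
sphere, hence an H-eigenvector of \<open>Q\<close> for \<open>M\<close>.

In a cored hypergraph, negating \<open>x\<close> at the chosen cored vertex of every edge negates
each product \<open>\<Prod>_{s \<in> e-{i}} x_s\<close> seen from a vertex \<open>i\<close> that is not chosen, while at a
chosen vertex, which lies in a single edge, it negates \<open>x_i^(k-1)\<close> because \<open>k - 1\<close> is odd.
This turns H-eigenvectors of \<open>Q\<close> into H-eigenvectors of \<open>L\<close> with the same eigenvalue, so
\<open>\<lambda>(Q) = \<lambda>(L) = M\<close>, and both parts follow.\<close>

definition signed_laplacian_apply :: "nat \<Rightarrow> nat set set \<Rightarrow> real \<Rightarrow> (nat \<Rightarrow> real) \<Rightarrow> nat \<Rightarrow> real" where
  "signed_laplacian_apply k E \<sigma> x i =
     real (hdeg E i) * x i ^ (k - 1) + \<sigma> * (\<Sum>e\<in>{e\<in>E. i \<in> e}. \<Prod>s\<in>e - {i}. x s)"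

definition signed_laplacian_form :: "nat \<Rightarrow> nat \<Rightarrow> nat set set \<Rightarrow> real \<Rightarrow> (nat \<Rightarrow> real) \<Rightarrow> real" where
  "signed_laplacian_form n k E \<sigma> y =
     (\<Sum>j\<in>{1..n}. real (hdeg E j) * y j ^ k) + \<sigma> * real k * (\<Sum>e\<in>E. \<Prod>s\<in>e. y s)"

definition power_sum :: "nat \<Rightarrow> nat \<Rightarrow> (nat \<Rightarrow> real) \<Rightarrow> real" where
  "power_sum n k y = (\<Sum>j\<in>{1..n}. y j ^ k)"

section \<open>Action of the Laplacian tensors\<close>

lemma tensor_apply_degree_tensor:
  assumes "i \<in> {1..n}"
  shows "tensor_apply n k (degree_tensor E) x i = real (hdeg E i) * x i ^ (k - 1)"
proof -
  let ?J = "{js. length js = k - 1 \<and> set js \<subseteq> {1..n}}"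
  have "tensor_apply n k (degree_tensor E) x i
      = (\<Sum>js\<in>?J. if js = replicate (k - 1) i then real (hdeg E i) * x i ^ (k - 1) else 0)"
    unfolding tensor_apply_def
  proof (rule sum.cong)
    fix js assume "js \<in> ?J"
    then have "(\<forall>j\<in>set js. j = i) \<longleftrightarrow> js = replicate (k - 1) i"
      by (auto intro: replicate_eqI)
    then show "degree_tensor E (i # js) * prod_list (map x js)
      = (if js = replicate (k - 1) i then real (hdeg E i) * x i ^ (k - 1) else 0)"
      by (auto simp: degree_tensor_def prod_list_replicate)
  qed simp
  also have "\<dots> = real (hdeg E i) * x i ^ (k - 1)"
  proof -
    have "finite ?J"
      using finite_lists_length_eq[of "{1..n}" "k - 1"] by (simp add: conj_commute)
    moreover have "replicate (k - 1) i \<in> ?J" using assms by auto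
    ultimately show ?thesis by (simp only: sum.delta if_True)
  qed
  finally show ?thesis .
qed

lemma tensor_apply_add:
  "tensor_apply n k (\<lambda>is. S is + T is) x i = tensor_apply n k S x i + tensor_apply n k T x i"
  unfolding tensor_apply_def by (simp add: distrib_right sum.distrib)

lemma tensor_apply_diff:
  "tensor_apply n k (\<lambda>is. S is - T is) x i = tensor_apply n k S x i - tensor_apply n k T x i"
  unfolding tensor_apply_def by (simp add: left_diff_distrib sum_subtractf)

lemma largest_H_eigenvalue_unique:
  "largest_H_eigenvalue n k T a \<Longrightarrow> largest_H_eigenvalue n k T b \<Longrightarrow> a = b"
  unfolding largest_H_eigenvalue_def by (meson order_antisym)

locale uniform_hypergraph =
  fixes n k :: nat and E :: "nat set set"
  assumes uniform: "k_uniform_hypergraph n k E"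
    and k_pos: "0 < k"
begin

abbreviation "lap \<equiv> signed_laplacian_apply k E"
abbreviation "form \<equiv> signed_laplacian_form n k E"
abbreviation "psum \<equiv> power_sum n k"

lemma edge_subset: "e \<in> E \<Longrightarrow> e \<subseteq> {1..n}"
  and card_edge: "e \<in> E \<Longrightarrow> card e = k"
  using uniform by (auto simp: k_uniform_hypergraph_def)

lemma finite_edge: "e \<in> E \<Longrightarrow> finite e"
  using edge_subset finite_subset by blast

lemma n_pos: "0 < n"
proof -
  obtain e where e: "e \<in> E" using uniform by (auto simp: k_uniform_hypergraph_def)
  then have "e \<noteq> {}" using card_edge k_pos by fastforce
  with edge_subset[OF e] show ?thesis by auto
qed

lemma finite_edges: "finite E"
  by (rule finite_subset[of _ "Pow {1..n}"]) (use edge_subset in auto)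

lemma lists_completing_edges:
  "{js. length js = k - 1 \<and> set js \<subseteq> {1..n} \<and> set (i # js) \<in> E}
     = (\<Union>e\<in>{e\<in>E. i \<in> e}. permutations_of_set (e - {i}))"
proof (intro equalityI subsetI)
  fix js assume "js \<in> {js. length js = k - 1 \<and> set js \<subseteq> {1..n} \<and> set (i # js) \<in> E}"
  then have js: "length js = k - 1" "set (i # js) \<in> E" by auto
  have "distinct (i # js)"
  proof (rule card_distinct)
    show "card (set (i # js)) = length (i # js)"
      using card_edge[OF js(2)] js(1) k_pos by simp
  qed
  then have "js \<in> permutations_of_set (set (i # js) - {i})"
    by (auto intro: permutations_of_setI)
  with js(2) show "js \<in> (\<Union>e\<in>{e\<in>E. i \<in> e}. permutations_of_set (e - {i}))"
    by auto
next
  fix js assume "js \<in> (\<Union>e\<in>{e\<in>E. i \<in> e}. permutations_of_set (e - {i}))"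
  then obtain e where e: "e \<in> E" "i \<in> e" and js: "js \<in> permutations_of_set (e - {i})"
    by blast
  have "length js = k - 1"
    using length_finite_permutations_of_set[OF js] finite_edge[OF e(1)] card_edge[OF e(1)] e(2)
    by simp
  moreover have "set (i # js) = e"
    using e(2) permutations_of_setD(1)[OF js] by auto
  ultimately show "js \<in> {js. length js = k - 1 \<and> set js \<subseteq> {1..n} \<and> set (i # js) \<in> E}"
    using e edge_subset by auto
qed

lemma tensor_apply_adjacency_tensor:
  "tensor_apply n k (adjacency_tensor k E) x i = (\<Sum>e\<in>{e\<in>E. i \<in> e}. \<Prod>s\<in>e - {i}. x s)"
proof -
  let ?J = "{js. length js = k - 1 \<and> set js \<subseteq> {1..n}}"
  let ?S = "\<lambda>e. permutations_of_set (e - {i})"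
  have "tensor_apply n k (adjacency_tensor k E) x i
      = (\<Sum>js\<in>?J. if set (i # js) \<in> E then prod_list (map x js) / fact (k - 1) else 0)"
    unfolding tensor_apply_def
  proof (rule sum.cong[OF refl])
    fix js assume "js \<in> ?J"
    then have "length (i # js) = k" using k_pos by simp
    then show "adjacency_tensor k E (i # js) * prod_list (map x js)
      = (if set (i # js) \<in> E then prod_list (map x js) / fact (k - 1) else 0)"
      by (simp add: adjacency_tensor_def)
  qed
  also have "\<dots> = (\<Sum>js\<in>{js\<in>?J. set (i # js) \<in> E}. prod_list (map x js) / fact (k - 1))"
    using finite_lists_length_eq[of "{1..n}" "k - 1"]
    by (intro sum.inter_filter[symmetric]) (simp add: conj_commute)
  also have "{js\<in>?J. set (i # js) \<in> E} = (\<Union>e\<in>{e\<in>E. i \<in> e}. ?S e)"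
    unfolding lists_completing_edges[symmetric] by blast
  also have "(\<Sum>js\<in>(\<Union>e\<in>{e\<in>E. i \<in> e}. ?S e). prod_list (map x js) / fact (k - 1))
      = (\<Sum>e\<in>{e\<in>E. i \<in> e}. \<Sum>js\<in>?S e. prod_list (map x js) / fact (k - 1))"
  proof (rule sum.UNION_disjoint)
    show "finite {e\<in>E. i \<in> e}" using finite_edges by simp
    show "\<forall>e\<in>{e\<in>E. i \<in> e}. \<forall>e'\<in>{e\<in>E. i \<in> e}. e \<noteq> e' \<longrightarrow> ?S e \<inter> ?S e' = {}"
      by (auto dest!: permutations_of_setD(1))
  qed simp
  also have "\<dots> = (\<Sum>e\<in>{e\<in>E. i \<in> e}. \<Prod>s\<in>e - {i}. x s)"
  proof (rule sum.cong[OF refl])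
    fix e assume e: "e \<in> {e\<in>E. i \<in> e}"
    have "(\<Sum>js\<in>?S e. prod_list (map x js) / fact (k - 1)) = (\<Sum>js\<in>?S e. (\<Prod>s\<in>e - {i}. x s) / fact (k - 1))"
      by (intro sum.cong refl) (metis permutations_of_setD prod.distinct_set_conv_list)
    also have "\<dots> = (\<Prod>s\<in>e - {i}. x s) * (card (?S e) / fact (k - 1))"
      by simp
    also have "card (?S e) = fact (k - 1)"
      using e finite_edge card_edge by simp
    finally show "(\<Sum>js\<in>?S e. prod_list (map x js) / fact (k - 1)) = (\<Prod>s\<in>e - {i}. x s)"
      by simp
  qed
  finally show ?thesis .
qed

lemma tensor_apply_signless_laplacian:
  "i \<in> {1..n} \<Longrightarrow> tensor_apply n k (signless_laplacian_tensor k E) x i = lap 1 x i"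
  unfolding signless_laplacian_tensor_def[abs_def]
  by (simp add: tensor_apply_add tensor_apply_degree_tensor tensor_apply_adjacency_tensor
      signed_laplacian_apply_def)

lemma tensor_apply_laplacian:
  "i \<in> {1..n} \<Longrightarrow> tensor_apply n k (laplacian_tensor k E) x i = lap (-1) x i"
  unfolding laplacian_tensor_def[abs_def]
  by (simp add: tensor_apply_diff tensor_apply_degree_tensor tensor_apply_adjacency_tensor
      signed_laplacian_apply_def)

lemma H_eigenpair_signless_laplacian_iff:
  "H_eigenpair n k (signless_laplacian_tensor k E) \<mu> x \<longleftrightarrow>
     (\<exists>i\<in>{1..n}. x i \<noteq> 0) \<and> (\<forall>i\<in>{1..n}. lap 1 x i = \<mu> * x i ^ (k - 1))"
  unfolding H_eigenpair_def by (simp add: tensor_apply_signless_laplacian)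

lemma H_eigenpair_laplacian_iff:
  "H_eigenpair n k (laplacian_tensor k E) \<mu> x \<longleftrightarrow>
     (\<exists>i\<in>{1..n}. x i \<noteq> 0) \<and> (\<forall>i\<in>{1..n}. lap (-1) x i = \<mu> * x i ^ (k - 1))"
  unfolding H_eigenpair_def by (simp add: tensor_apply_laplacian)

section \<open>The associated forms\<close>

lemma mult_power_pred: "(a::real) * a ^ (k - 1) = a ^ k"
  using power_minus_mult[OF k_pos, of a] by (simp add: mult.commute)

lemma sum_mult_lap_eq_form: "(\<Sum>i\<in>{1..n}. y i * lap \<sigma> y i) = form \<sigma> y"
proof -
  have edge_sum: "(\<Sum>i\<in>{i\<in>{1..n}. i \<in> e}. y i * (\<Prod>s\<in>e - {i}. y s)) = real k * (\<Prod>s\<in>e. y s)"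
    if e: "e \<in> E" for e
  proof -
    have "{i\<in>{1..n}. i \<in> e} = e" using edge_subset[OF e] by auto
    moreover have "y i * (\<Prod>s\<in>e - {i}. y s) = (\<Prod>s\<in>e. y s)" if "i \<in> e" for i
      using finite_edge[OF e] that by (simp add: prod.remove)
    ultimately show ?thesis using card_edge[OF e] by simp
  qed
  have "y i * lap \<sigma> y i
      = real (hdeg E i) * y i ^ k + \<sigma> * (\<Sum>e\<in>{e\<in>E. i \<in> e}. y i * (\<Prod>s\<in>e - {i}. y s))" for i
    using mult_power_pred[of "y i"]
    by (simp add: signed_laplacian_apply_def algebra_simps sum_distrib_left)
  then have "(\<Sum>i\<in>{1..n}. y i * lap \<sigma> y i)
      = (\<Sum>i\<in>{1..n}. real (hdeg E i) * y i ^ k)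
        + \<sigma> * (\<Sum>i\<in>{1..n}. \<Sum>e\<in>{e\<in>E. i \<in> e}. y i * (\<Prod>s\<in>e - {i}. y s))"
    by (simp add: sum.distrib sum_distrib_left)
  also have "(\<Sum>i\<in>{1..n}. \<Sum>e\<in>{e\<in>E. i \<in> e}. y i * (\<Prod>s\<in>e - {i}. y s))
      = (\<Sum>e\<in>E. \<Sum>i\<in>{i\<in>{1..n}. i \<in> e}. y i * (\<Prod>s\<in>e - {i}. y s))"
    using finite_edges by (intro sum.swap_restrict) simp_all
  also have "\<dots> = (\<Sum>e\<in>E. real k * (\<Prod>s\<in>e. y s))"
    using edge_sum by simp
  finally show ?thesis
    by (simp add: signed_laplacian_form_def sum_distrib_left mult.assoc)
qed

lemma form_eq_of_eigen:
  assumes "\<forall>i\<in>{1..n}. lap \<sigma> x i = \<mu> * x i ^ (k - 1)"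
  shows "form \<sigma> x = \<mu> * psum x"
proof -
  have "form \<sigma> x = (\<Sum>i\<in>{1..n}. \<mu> * (x i * x i ^ (k - 1)))"
    using assms by (simp add: sum_mult_lap_eq_form[symmetric] mult.left_commute)
  then show ?thesis
    by (simp only: mult_power_pred power_sum_def sum_distrib_left)
qed

lemma form_cong: "(\<And>j. j \<in> {1..n} \<Longrightarrow> y j = y' j) \<Longrightarrow> form \<sigma> y = form \<sigma> y'"
  unfolding signed_laplacian_form_def
  by (intro arg_cong2[where f = "(+)"] arg_cong2[where f = "(*)"] sum.cong prod.cong refl)
     (use edge_subset in fastforce)+

lemma form_scale: "form \<sigma> (\<lambda>j. c * y j) = c ^ k * form \<sigma> y"
proof -
  have "(\<Prod>s\<in>e. c * y s) = c ^ k * (\<Prod>s\<in>e. y s)" if "e \<in> E" for e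
    using card_edge[OF that] by (simp add: prod.distrib)
  then have "(\<Sum>e\<in>E. \<Prod>s\<in>e. c * y s) = c ^ k * (\<Sum>e\<in>E. \<Prod>s\<in>e. y s)"
    by (simp add: sum_distrib_left)
  then show ?thesis
    by (simp add: signed_laplacian_form_def power_mult_distrib sum_distrib_left algebra_simps)
qed

lemma psum_scale: "psum (\<lambda>j. c * y j) = c ^ k * psum y"
  unfolding power_sum_def by (simp add: power_mult_distrib sum_distrib_left)

lemma prod_edge_fun_upd:
  assumes "e \<in> E"
  shows "(\<Prod>s\<in>e. (z(i := w)) s) = (if i \<in> e then w * (\<Prod>s\<in>e - {i}. z s) else (\<Prod>s\<in>e. z s))"
proof (cases "i \<in> e")
  case True
  have "(\<Prod>s\<in>e. (z(i := w)) s) = (z(i := w)) i * (\<Prod>s\<in>e - {i}. (z(i := w)) s)"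
    by (rule prod.remove[OF finite_edge[OF assms] True])
  also have "(\<Prod>s\<in>e - {i}. (z(i := w)) s) = (\<Prod>s\<in>e - {i}. z s)"
    by (rule prod.cong) auto
  finally show ?thesis using True by simp
qed (auto intro: prod.cong)

lemma form_fun_upd:
  assumes "i \<in> {1..n}"
  shows "form \<sigma> (z(i := w)) = real (hdeg E i) * w ^ k
           + \<sigma> * real k * w * (\<Sum>e\<in>{e\<in>E. i \<in> e}. \<Prod>s\<in>e - {i}. z s) + form \<sigma> (z(i := 0))"
proof -
  define C where "C = (\<Sum>j\<in>{1..n} - {i}. real (hdeg E j) * z j ^ k)
    + \<sigma> * real k * (\<Sum>e\<in>{e\<in>E. i \<notin> e}. \<Prod>s\<in>e. z s)"
  have deg_part: "(\<Sum>j\<in>{1..n}. real (hdeg E j) * (z(i := v)) j ^ k)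
      = real (hdeg E i) * v ^ k + (\<Sum>j\<in>{1..n} - {i}. real (hdeg E j) * z j ^ k)" for v
    using assms by (simp add: sum.remove)
  have edge_part: "(\<Sum>e\<in>E. \<Prod>s\<in>e. (z(i := v)) s)
      = v * (\<Sum>e\<in>{e\<in>E. i \<in> e}. \<Prod>s\<in>e - {i}. z s) + (\<Sum>e\<in>{e\<in>E. i \<notin> e}. \<Prod>s\<in>e. z s)" for v
  proof -
    have "(\<Sum>e\<in>E. \<Prod>s\<in>e. (z(i := v)) s)
        = (\<Sum>e\<in>E. if i \<in> e then v * (\<Prod>s\<in>e - {i}. z s) else (\<Prod>s\<in>e. z s))"
      by (rule sum.cong[OF refl prod_edge_fun_upd])
    also have "\<dots> = (\<Sum>e\<in>E \<inter> {e. i \<in> e}. v * (\<Prod>s\<in>e - {i}. z s))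
        + (\<Sum>e\<in>E \<inter> - {e. i \<in> e}. \<Prod>s\<in>e. z s)"
      by (rule sum.If_cases[OF finite_edges])
    finally show ?thesis
      unfolding Int_def Compl_iff mem_Collect_eq by (simp add: sum_distrib_left)
  qed
  have "form \<sigma> (z(i := v)) = real (hdeg E i) * v ^ k
           + \<sigma> * real k * v * (\<Sum>e\<in>{e\<in>E. i \<in> e}. \<Prod>s\<in>e - {i}. z s) + C" for v
    unfolding signed_laplacian_form_def deg_part edge_part C_def by (simp add: algebra_simps)
  from this[of w] this[of 0] show ?thesis using k_pos by simp
qed

lemma psum_fun_upd: "i \<in> {1..n} \<Longrightarrow> psum (z(i := w)) = w ^ k + psum (z(i := 0))"
  unfolding power_sum_def using k_pos by (simp add: sum.remove)

text \<open>Fermat's rule for the one-variable polynomial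
\<open>w \<mapsto> M \<cdot> psum (z(i := w)) - form \<sigma> (z(i := w))\<close>, which is nonnegative and vanishes at \<open>z i\<close>.\<close>

lemma lap_eigen_of_form_max:
  assumes max: "\<And>y. form \<sigma> y \<le> M * psum y" and eq: "form \<sigma> z = M * psum z"
    and i: "i \<in> {1..n}"
  shows "lap \<sigma> z i = M * z i ^ (k - 1)"
proof -
  define B where "B = (\<Sum>e\<in>{e\<in>E. i \<in> e}. \<Prod>s\<in>e - {i}. z s)"
  define d where "d = real (hdeg E i)"
  define h where "h w = M * (w ^ k + psum (z(i := 0)))
    - (d * w ^ k + \<sigma> * real k * w * B + form \<sigma> (z(i := 0)))" for w
  have h_eq: "h w = M * psum (z(i := w)) - form \<sigma> (z(i := w))" for w
    unfolding h_def B_def d_def form_fun_upd[OF i, of \<sigma> z w] psum_fun_upd[OF i, of z w] ..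
  have "h (z i) \<le> h w" for w
    using eq max[of "z(i := w)"] by (simp add: h_eq)
  moreover have "DERIV h (z i) :> M * (real k * z i ^ (k - 1)) - (d * (real k * z i ^ (k - 1)) + \<sigma> * real k * B)"
    unfolding h_def[abs_def] by (auto intro!: derivative_eq_intros)
  ultimately have "M * (real k * z i ^ (k - 1)) - (d * (real k * z i ^ (k - 1)) + \<sigma> * real k * B) = 0"
    by (intro DERIV_local_min[of h _ _ 1]) auto
  then have "real k * (M * z i ^ (k - 1) - (d * z i ^ (k - 1) + \<sigma> * B)) = 0"
    by (simp add: algebra_simps)
  with k_pos show ?thesis
    by (simp add: signed_laplacian_apply_def B_def d_def)
qed

end

section \<open>The largest H-eigenvalue of the signless Laplacian\<close>

locale even_uniform_hypergraph = uniform_hypergraph +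
  assumes even_k: "even k"
begin

lemma odd_pred: "odd (k - 1)"
  using even_k k_pos by presburger

lemma psum_nonneg: "0 \<le> psum y"
  unfolding power_sum_def using even_k by (simp add: sum_nonneg zero_le_even_power)

lemma psum_pos:
  assumes "\<exists>i\<in>{1..n}. y i \<noteq> 0"
  shows "0 < psum y"
proof -
  obtain i where "i \<in> {1..n}" "y i \<noteq> 0" using assms by blast
  then show ?thesis
    unfolding power_sum_def using even_k k_pos
    by (intro sum_pos2[of _ i]) (auto simp: zero_le_even_power zero_less_power_eq)
qed

lemma psum_abs: "psum (\<lambda>j. \<bar>y j\<bar>) = psum y"
  unfolding power_sum_def using even_k by (simp add: power_even_abs)

lemma form_le_form_abs:
  assumes "\<bar>\<sigma>\<bar> \<le> 1"
  shows "form \<sigma> y \<le> form 1 (\<lambda>j. \<bar>y j\<bar>)"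
proof -
  have "\<sigma> * (\<Sum>e\<in>E. \<Prod>s\<in>e. y s) \<le> \<bar>\<sigma>\<bar> * \<bar>\<Sum>e\<in>E. \<Prod>s\<in>e. y s\<bar>"
    by (metis abs_ge_self abs_mult)
  also have "\<dots> \<le> 1 * (\<Sum>e\<in>E. \<Prod>s\<in>e. \<bar>y s\<bar>)"
    using assms
    by (intro mult_mono order_trans[OF sum_abs]) (auto simp: abs_prod intro: sum_nonneg)
  finally have "real k * (\<sigma> * (\<Sum>e\<in>E. \<Prod>s\<in>e. y s)) \<le> real k * (\<Sum>e\<in>E. \<Prod>s\<in>e. \<bar>y s\<bar>)"
    by (intro mult_left_mono) simp_all
  then have "\<sigma> * real k * (\<Sum>e\<in>E. \<Prod>s\<in>e. y s) \<le> real k * (\<Sum>e\<in>E. \<Prod>s\<in>e. \<bar>y s\<bar>)"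
    by (simp add: mult.assoc mult.left_commute)
  then show ?thesis
    unfolding signed_laplacian_form_def using even_k by (simp add: power_even_abs)
qed

lemma form_le_of_unit_bound:
  assumes unit: "\<And>y. psum y = 1 \<Longrightarrow> form \<sigma> y \<le> M"
  shows "form \<sigma> y \<le> M * psum y"
proof (cases "psum y = 0")
  case True
  have "y j = 0" if "j \<in> {1..n}" for j
    using psum_pos[of y] True that by force
  then have "form \<sigma> y = form \<sigma> (\<lambda>j. 0 * y j)" by (intro form_cong) simp
  also have "\<dots> = 0" using k_pos by (simp only: form_scale) simp
  finally show ?thesis using True by simp
next
  case False
  then have pos: "0 < psum y" using psum_nonneg by (simp add: order_less_le)
  define c where "c = 1 / root k (psum y)"
  have ck: "c ^ k = 1 / psum y"
    using pos k_pos by (simp add: c_def power_divide real_root_pow_pos)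
  have "form \<sigma> y / psum y = form \<sigma> (\<lambda>j. c * y j)" by (simp add: form_scale ck)
  also have "\<dots> \<le> M" using pos by (intro unit) (simp add: psum_scale ck)
  finally show ?thesis using pos by (simp add: pos_divide_le_eq)
qed

text \<open>Only the coordinates in \<open>{1..n}\<close> matter, so compactness is used in the product
space of functions on \<open>{1..n}\<close> and an arbitrary \<open>y\<close> is replaced by its restriction.\<close>

lemma form_attains_max_on_unit_sphere:
  "\<exists>z. psum z = 1 \<and> (\<forall>y. psum y = 1 \<longrightarrow> form \<sigma> y \<le> form \<sigma> z)"
proof -
  let ?X = "product_topology (\<lambda>_. euclideanreal) {1..n} :: (nat \<Rightarrow> real) topology"
  define K where "K = {y \<in> topspace ?X. psum y \<in> {1}}"
  have cont_psum: "continuous_map ?X euclideanreal psum"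
    unfolding power_sum_def by (intro continuous_intros) auto
  have cont_form: "continuous_map ?X euclideanreal (form \<sigma>)"
  proof -
    have "\<forall>e\<in>E. \<forall>s\<in>e. s \<in> {1..n}" using edge_subset by blast
    then show ?thesis
      unfolding signed_laplacian_form_def
      by (intro continuous_intros) (auto simp: finite_edges finite_edge)
  qed
  have bounded: "K \<subseteq> PiE {1..n} (\<lambda>_. {-1..1})"
  proof
    fix y assume y: "y \<in> K"
    have "\<bar>y j\<bar> \<le> 1" if j: "j \<in> {1..n}" for j
    proof -
      have "y j ^ k \<le> psum y"
        unfolding power_sum_def using j even_k
        by (intro member_le_sum) (auto simp: zero_le_even_power)
      then have "\<bar>y j\<bar> ^ k \<le> 1" using y even_k by (simp add: K_def power_even_abs)
      then show ?thesis using k_pos by (simp add: power_le_one_iff)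
    qed
    then show "y \<in> PiE {1..n} (\<lambda>_. {-1..1})" using y by (auto simp: K_def PiE_iff abs_le_iff)
  qed
  have "compactin ?X K"
  proof (rule closed_compactin[OF _ bounded])
    show "compactin ?X (PiE {1..n} (\<lambda>_. {-1..1}))" by (simp add: compactin_PiE)
    show "closedin ?X K"
      unfolding K_def by (rule closedin_continuous_map_preimage[OF cont_psum]) simp
  qed
  then have compact_image: "compact (form \<sigma> ` K)"
    using image_compactin[OF _ cont_form] by simp
  define u :: "nat \<Rightarrow> real" where "u = restrict (\<lambda>j. if j = 1 then 1 else 0) {1..n}"
  have "psum u = (\<Sum>j\<in>{1..n}. if j = 1 then 1 else 0)"
    unfolding power_sum_def u_def using k_pos by (intro sum.cong) auto
  also have "\<dots> = 1" using n_pos by simp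
  finally have "u \<in> K" by (simp add: K_def u_def)
  then obtain z where z: "z \<in> K" and zmax: "\<And>t. t \<in> K \<Longrightarrow> form \<sigma> t \<le> form \<sigma> z"
    using compact_attains_sup[OF compact_image] by blast
  have "form \<sigma> y \<le> form \<sigma> z" if "psum y = 1" for y
  proof -
    have "restrict y {1..n} \<in> K"
      using that by (simp add: K_def PiE_iff power_sum_def)
    moreover have "form \<sigma> (restrict y {1..n}) = form \<sigma> y" by (rule form_cong) simp
    ultimately show ?thesis using zmax by metis
  qed
  with z show ?thesis by (auto simp: K_def)
qed

lemma exists_form_bound_attained:
  obtains M z where "\<And>y. form 1 y \<le> M * psum y" and "psum z = 1" and "form 1 z = M"
proof -
  obtain z where "psum z = 1" and "\<forall>y. psum y = 1 \<longrightarrow> form 1 y \<le> form 1 z"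
    using form_attains_max_on_unit_sphere by blast
  then show thesis
    by (intro that[of "form 1 z" z]) (auto intro: form_le_of_unit_bound)
qed

lemma eigenvalue_le_form_bound:
  assumes bound: "\<And>y. form 1 y \<le> M * psum y" and \<sigma>: "\<bar>\<sigma>\<bar> \<le> 1"
    and eigen: "\<forall>i\<in>{1..n}. lap \<sigma> x i = \<mu> * x i ^ (k - 1)" and nonzero: "\<exists>i\<in>{1..n}. x i \<noteq> 0"
  shows "\<mu> \<le> M"
proof -
  have "\<mu> * psum x = form \<sigma> x" using form_eq_of_eigen[OF eigen] by simp
  also have "\<dots> \<le> form 1 (\<lambda>j. \<bar>x j\<bar>)" using form_le_form_abs[OF \<sigma>] .
  also have "\<dots> \<le> M * psum x" using bound[of "\<lambda>j. \<bar>x j\<bar>"] by (simp add: psum_abs)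
  finally show ?thesis using psum_pos[OF nonzero] by simp
qed

lemma H_eigenpair_abs_of_form_bound:
  assumes bound: "\<And>y. form 1 y \<le> M * psum y" and \<sigma>: "\<bar>\<sigma>\<bar> \<le> 1"
    and attained: "M * psum x \<le> form \<sigma> x" and nonzero: "\<exists>i\<in>{1..n}. x i \<noteq> 0"
  shows "H_eigenpair n k (signless_laplacian_tensor k E) M (\<lambda>j. \<bar>x j\<bar>)"
proof -
  have "form 1 (\<lambda>j. \<bar>x j\<bar>) = M * psum (\<lambda>j. \<bar>x j\<bar>)"
    using attained form_le_form_abs[OF \<sigma>, of x] bound[of "\<lambda>j. \<bar>x j\<bar>"]
    by (simp add: psum_abs)
  then have "\<forall>i\<in>{1..n}. lap 1 (\<lambda>j. \<bar>x j\<bar>) i = M * \<bar>x i\<bar> ^ (k - 1)"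
    using lap_eigen_of_form_max[OF bound] by blast
  with nonzero show ?thesis by (simp add: H_eigenpair_signless_laplacian_iff)
qed

end

section \<open>Cored hypergraphs\<close>

locale cored_hypergraph = even_uniform_hypergraph +
  fixes ie :: "nat set \<Rightarrow> nat"
  assumes cored_choice: "\<forall>e\<in>E. ie e \<in> e \<and> cored_vertex E (ie e)"
begin

lemma edges_containing_cored_choice:
  assumes e: "e \<in> E"
  shows "{e'\<in>E. ie e \<in> e'} = {e}"
proof -
  have "card {e'\<in>E. ie e \<in> e'} = 1"
    using cored_choice e by (simp add: cored_vertex_def hdeg_def)
  then obtain a where "{e'\<in>E. ie e \<in> e'} = {a}" by (rule card_1_singletonE)
  moreover have "e \<in> {e'\<in>E. ie e \<in> e'}" using cored_choice e by simp
  ultimately show ?thesis by simp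
qed

lemma cored_choice_mem_iff:
  assumes e: "e \<in> E" and s: "s \<in> e"
  shows "s \<in> ie ` E \<longleftrightarrow> s = ie e"
proof
  assume "s \<in> ie ` E"
  then obtain e' where e': "e' \<in> E" and s_eq: "s = ie e'" by blast
  have "e \<in> {e''\<in>E. ie e' \<in> e''}" using e s s_eq by simp
  then have "e = e'" using edges_containing_cored_choice[OF e'] by simp
  with s_eq show "s = ie e" by simp
qed (use e in simp)

lemma prod_flip_edge:
  fixes x :: "nat \<Rightarrow> real"
  assumes e: "e \<in> E" and i: "i \<in> e"
  shows "(\<Prod>s\<in>e - {i}. if s \<in> ie ` E then - x s else x s)
           = (if i = ie e then (\<Prod>s\<in>e - {i}. x s) else - (\<Prod>s\<in>e - {i}. x s))"
proof (cases "i = ie e")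
  case True
  have "(\<Prod>s\<in>e - {i}. if s \<in> ie ` E then - x s else x s) = (\<Prod>s\<in>e - {i}. x s)"
    by (rule prod.cong) (use cored_choice_mem_iff[OF e] True in auto)
  with True show ?thesis by simp
next
  case False
  let ?y = "\<lambda>s. if s \<in> ie ` E then - x s else x s"
  have flipped: "ie e \<in> e - {i}" using cored_choice e False by auto
  have fin: "finite (e - {i})" using finite_edge[OF e] by simp
  have "(\<Prod>s\<in>e - {i}. ?y s) = ?y (ie e) * (\<Prod>s\<in>e - {i} - {ie e}. ?y s)"
    by (rule prod.remove[OF fin flipped])
  also have "(\<Prod>s\<in>e - {i} - {ie e}. ?y s) = (\<Prod>s\<in>e - {i} - {ie e}. x s)"
    using cored_choice_mem_iff[OF e] by (intro prod.cong) auto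
  also have "?y (ie e) = - x (ie e)" using e by simp
  finally show ?thesis using False prod.remove[OF fin flipped, of x] by simp
qed

lemma lap_flip:
  "lap (-1) (\<lambda>j. if j \<in> ie ` E then - x j else x j) i
     = (if i \<in> ie ` E then - lap 1 x i else lap 1 x i)"
proof (cases "i \<in> ie ` E")
  case True
  then obtain e0 where e0: "e0 \<in> E" "i = ie e0" by blast
  have edges: "{e\<in>E. i \<in> e} = {e0}" using edges_containing_cored_choice e0 by simp
  have "i \<in> e0" using cored_choice e0 by simp
  then have prod: "(\<Prod>s\<in>e0 - {i}. if s \<in> ie ` E then - x s else x s) = (\<Prod>s\<in>e0 - {i}. x s)"
    using prod_flip_edge[OF e0(1)] e0(2) by simp
  have "(- x i) ^ (k - 1) = - (x i ^ (k - 1))" using odd_pred by (rule power_minus_odd)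
  with True show ?thesis by (simp add: signed_laplacian_apply_def edges prod)
next
  case False
  then have "i \<noteq> ie e" if "e \<in> E" for e using that by blast
  then have "(\<Sum>e\<in>{e\<in>E. i \<in> e}. \<Prod>s\<in>e - {i}. if s \<in> ie ` E then - x s else x s)
      = (\<Sum>e\<in>{e\<in>E. i \<in> e}. - (\<Prod>s\<in>e - {i}. x s))"
    by (intro sum.cong refl) (simp add: prod_flip_edge)
  with False show ?thesis by (simp add: signed_laplacian_apply_def sum_negf)
qed

lemma H_eigenpair_laplacian_flip:
  assumes "H_eigenpair n k (signless_laplacian_tensor k E) \<mu> x"
  shows "H_eigenpair n k (laplacian_tensor k E) \<mu> (\<lambda>j. if j \<in> ie ` E then - x j else x j)"
proof -
  let ?y = "\<lambda>j. if j \<in> ie ` E then - x j else x j"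
  have nonzero: "\<exists>i\<in>{1..n}. x i \<noteq> 0"
    and eigen: "\<forall>i\<in>{1..n}. lap 1 x i = \<mu> * x i ^ (k - 1)"
    using assms by (simp_all add: H_eigenpair_signless_laplacian_iff)
  have "lap (-1) ?y i = \<mu> * ?y i ^ (k - 1)" if "i \<in> {1..n}" for i
    using eigen that odd_pred by (simp add: lap_flip power_minus_odd)
  moreover have "\<exists>i\<in>{1..n}. ?y i \<noteq> 0" using nonzero by auto
  ultimately show ?thesis by (simp add: H_eigenpair_laplacian_iff)
qed

lemma common_largest_H_eigenvalue:
  obtains M where "\<And>y. form 1 y \<le> M * psum y"
    and "largest_H_eigenvalue n k (signless_laplacian_tensor k E) M"
    and "largest_H_eigenvalue n k (laplacian_tensor k E) M"
proof -
  obtain M z where bound: "\<And>y. form 1 y \<le> M * psum y" and z: "psum z = 1" "form 1 z = M"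
    by (rule exists_form_bound_attained) blast
  have "\<exists>i\<in>{1..n}. z i \<noteq> 0"
  proof (rule ccontr)
    assume "\<not> (\<exists>i\<in>{1..n}. z i \<noteq> 0)"
    then have "psum z = 0" using k_pos by (simp add: power_sum_def)
    with z(1) show False by simp
  qed
  then have Q: "H_eigenpair n k (signless_laplacian_tensor k E) M (\<lambda>j. \<bar>z j\<bar>)"
    using z by (intro H_eigenpair_abs_of_form_bound[OF bound, of 1]) simp_all
  then have L: "H_eigenpair n k (laplacian_tensor k E) M (\<lambda>j. if j \<in> ie ` E then - \<bar>z j\<bar> else \<bar>z j\<bar>)"
    by (rule H_eigenpair_laplacian_flip)
  have "\<mu> \<le> M" if "H_eigenvalue n k (signless_laplacian_tensor k E) \<mu>" for \<mu>
    using that eigenvalue_le_form_bound[OF bound, of 1]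
    by (auto simp: H_eigenvalue_def H_eigenpair_signless_laplacian_iff)
  moreover have "\<mu> \<le> M" if "H_eigenvalue n k (laplacian_tensor k E) \<mu>" for \<mu>
    using that eigenvalue_le_form_bound[OF bound, of "-1"]
    by (auto simp: H_eigenvalue_def H_eigenpair_laplacian_iff)
  ultimately show thesis
    using that[OF bound] Q L by (auto simp: largest_H_eigenvalue_def H_eigenvalue_def)
qed

lemma largest_laplacian_eigenpair_of_signless:
  assumes "largest_H_eigenvalue n k (signless_laplacian_tensor k E) lam"
    and "H_eigenpair n k (signless_laplacian_tensor k E) lam x"
  shows "largest_H_eigenvalue n k (laplacian_tensor k E) lam
    \<and> H_eigenpair n k (laplacian_tensor k E) lam (\<lambda>j. if j \<in> ie ` E then - x j else x j)"
proof -
  obtain M where "largest_H_eigenvalue n k (signless_laplacian_tensor k E) M"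
    and "largest_H_eigenvalue n k (laplacian_tensor k E) M"
    by (rule common_largest_H_eigenvalue) blast
  with assms(1) have "largest_H_eigenvalue n k (laplacian_tensor k E) lam"
    using largest_H_eigenvalue_unique by metis
  with H_eigenpair_laplacian_flip[OF assms(2)] show ?thesis by blast
qed

lemma largest_signless_eigenpair_of_laplacian:
  assumes "largest_H_eigenvalue n k (laplacian_tensor k E) lam"
    and "H_eigenpair n k (laplacian_tensor k E) lam x"
  shows "largest_H_eigenvalue n k (signless_laplacian_tensor k E) lam
    \<and> H_eigenpair n k (signless_laplacian_tensor k E) lam (\<lambda>j. \<bar>x j\<bar>)"
proof -
  obtain M where bound: "\<And>y. form 1 y \<le> M * psum y"
    and Q: "largest_H_eigenvalue n k (signless_laplacian_tensor k E) M"
    and L: "largest_H_eigenvalue n k (laplacian_tensor k E) M"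
    by (rule common_largest_H_eigenvalue) blast
  have "lam = M" using largest_H_eigenvalue_unique[OF assms(1) L] .
  moreover have "form (-1) x = lam * psum x" and "\<exists>i\<in>{1..n}. x i \<noteq> 0"
    using assms(2) form_eq_of_eigen by (auto simp: H_eigenpair_laplacian_iff)
  ultimately have "H_eigenpair n k (signless_laplacian_tensor k E) lam (\<lambda>j. \<bar>x j\<bar>)"
    using H_eigenpair_abs_of_form_bound[OF bound, of "-1" x] by simp
  with Q \<open>lam = M\<close> show ?thesis by simp
qed

end

theorem proposition3p3:
  fixes n k :: nat and E :: "nat set set" and ie :: "nat set \<Rightarrow> nat"
  assumes "even k" and "k \<ge> 4"
    and "k_uniform_hypergraph n k E"
    and "cored E"
    and "\<forall>e\<in>E. ie e \<in> e \<and> cored_vertex E (ie e)"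
  shows
    "(\<forall>x lam. (\<forall>i\<in>{1..n}. x i \<ge> 0) \<and> largest_H_eigenvalue n k (signless_laplacian_tensor k E) lam
        \<and> H_eigenpair n k (signless_laplacian_tensor k E) lam x \<longrightarrow>
       (\<exists>mu. largest_H_eigenvalue n k (laplacian_tensor k E) mu \<and>
          H_eigenpair n k (laplacian_tensor k E) mu (\<lambda>j. if j \<in> ie ` E then - x j else x j)))
     \<and>
     (\<forall>x lam. largest_H_eigenvalue n k (laplacian_tensor k E) lam
        \<and> H_eigenpair n k (laplacian_tensor k E) lam x \<longrightarrow>
       (\<exists>mu. largest_H_eigenvalue n k (signless_laplacian_tensor k E) mu \<and>
          H_eigenpair n k (signless_laplacian_tensor k E) mu (\<lambda>i. \<bar>x i\<bar>)))"
proof -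
  interpret cored_hypergraph n k E ie
    using assms by unfold_locales auto
  show ?thesis
    using largest_laplacian_eigenpair_of_signless largest_signless_eigenpair_of_laplacian by blast
qed

end
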